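(* Let $j_1,\dots,j_6$ be non-negative half-integers (elements of $\tfrac12\mathbb Z_{\ge0}$) such that $j_1=j_5+j_6\ge 3$, $j_2=j_3$, and such that each of the four triples $$(h,j_2,j_3),\ (h,j_5,j_6),\ (j_4,j_2,j_6),\ (j_4,j_5,j_3)$$ satisfies the triangle condition both for $h=j_1$ and for $h=j_1-1$. If $\left\{\begin{matrix} j_1-1 & j_2 & j_3\\ j_4 & j_5 & j_6\end{matrix}\right\}=0$, then $\left\{\begin{matrix} j_1-2 & j_2 & j_3\\ j_4 & j_5 & j_6\end{matrix}\right\}\ne0$ and $\left\{\begin{matrix} j_1-3 & j_2 & j_3\\ j_4 & j_5 & j_6\end{matrix}\right\}\ne0$. In particular the four triples above satisfy the triangle condition also for $h=j_1-2$ and $h=j_1-3$.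
   Context: Three half-integers $j_1,j_2,j_3$ satisfy the triangle condition if $j_1+j_2+j_3\in\mathbb Z$ and $|j_1-j_2|\le j_3\le j_1+j_2$ (in particular all are non-negative). $\left\{\begin{matrix} j_1 & j_2 & j_3\\ j_4 & j_5 & j_6\end{matrix}\right\}$ denotes the Racah–Wigner $6j$-symbol of angular momentum theory (as in Varshalovich–Moskalev–Khersonskii, Quantum Theory of Angular Momentum, Ch. 9); it is a real number, defined to be $0$ unless all four triples $(j_1,j_2,j_3),(j_1,j_5,j_6),(j_4,j_2,j_6),(j_4,j_5,j_3)$ satisfy the triangle condition. *)

theory Defs
  imports Complex_Main
begin

definition halfint :: "real \<Rightarrow> bool" where
  "halfint x \<longleftrightarrow> x \<ge> 0 \<and> 2 * x \<in> \<int>"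

definition triangle :: "real \<Rightarrow> real \<Rightarrow> real \<Rightarrow> bool" where
  "triangle a b c \<longleftrightarrow> a + b + c \<in> \<int> \<and> \<bar>a - b\<bar> \<le> c \<and> c \<le> a + b"

definition tri_coeff :: "real \<Rightarrow> real \<Rightarrow> real \<Rightarrow> real" where
  "tri_coeff a b c = sqrt (fact (nat \<lfloor>a + b - c\<rfloor>) * fact (nat \<lfloor>a - b + c\<rfloor>)
      * fact (nat \<lfloor>- a + b + c\<rfloor>) / fact (nat \<lfloor>a + b + c\<rfloor> + 1))"

text \<open>Racah-Wigner 6j-symbol via the Racah formula (VMK Ch. 9, eq. 9.2.1).\<close>
definition sixj :: "real \<Rightarrow> real \<Rightarrow> real \<Rightarrow> real \<Rightarrow> real \<Rightarrow> real \<Rightarrow> real" where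
  "sixj j1 j2 j3 j4 j5 j6 =
    (if triangle j1 j2 j3 \<and> triangle j1 j5 j6 \<and> triangle j4 j2 j6 \<and> triangle j4 j5 j3 then
      (let a1 = nat \<lfloor>j1 + j2 + j3\<rfloor>; a2 = nat \<lfloor>j1 + j5 + j6\<rfloor>;
           a3 = nat \<lfloor>j4 + j2 + j6\<rfloor>; a4 = nat \<lfloor>j4 + j5 + j3\<rfloor>;
           b1 = nat \<lfloor>j1 + j2 + j4 + j5\<rfloor>; b2 = nat \<lfloor>j2 + j3 + j5 + j6\<rfloor>;
           b3 = nat \<lfloor>j3 + j1 + j6 + j4\<rfloor>
       in tri_coeff j1 j2 j3 * tri_coeff j1 j5 j6 * tri_coeff j4 j2 j6 * tri_coeff j4 j5 j3 *
          (\<Sum>t \<in> {max (max a1 a2) (max a3 a4) .. min b1 (min b2 b3)}.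
             (-1) ^ t * fact (t + 1) /
             (fact (t - a1) * fact (t - a2) * fact (t - a3) * fact (t - a4) *
              fact (b1 - t) * fact (b2 - t) * fact (b3 - t))))
     else 0)"

end

theory Submission
  imports Defs
begin

text \<open>For h = j5 + j6 - k and j2 = j3 only k + 1 terms of the Racah sum survive, and after
  dividing by a nonzero factor the 6j-symbol becomes a short hypergeometric sum in the nonnegative
  integers P = 2 j2 - j1, Q = j5 + j2 - j4, R = j6 + j2 - j4, U = j5 + j4 - j2, V = j6 + j4 - j2.
  With D = Q - U = R - V the sum for k = 1 equals j1 (D (P + 1) - 2 U V) / (P + 1), so the hypothesis
  is the relation D (P + 1) = 2 U V.  Under this relation the sums for k = 2 and k = 3 factor
  completely, into factors that are all positive once U, V > 0 and j1 \<ge> 3.\<close>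

fun falling_fact :: "real \<Rightarrow> nat \<Rightarrow> real" where
  "falling_fact x 0 = 1"
| "falling_fact x (Suc m) = falling_fact x m * (x - real m)"

lemma fact_add_eq_fact_mult_pochhammer: "(fact (n + m) :: real) = fact n * pochhammer (real n + 1) m"
  using pochhammer_product'[of "1 :: real" n m] by (simp add: pochhammer_fact add.commute)

lemma fact_eq_fact_diff_mult_falling_fact:
  "m \<le> n \<Longrightarrow> (fact n :: real) = fact (n - m) * falling_fact (real n) m"
proof (induction m)
  case (Suc m)
  then have "(fact (n - m) :: real) = real (n - m) * fact (n - Suc m)"
    by (metis Suc_diff_Suc Suc_le_lessD fact_Suc of_nat_Suc mult.commute)
  with Suc show ?case by (simp add: of_nat_diff)
qed simp

lemma falling_fact_of_nat_eq_0: "n < m \<Longrightarrow> falling_fact (real n) m = 0"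
  by (induction m) (auto simp: less_Suc_eq)

lemma tri_coeff_pos: "tri_coeff a b c > 0"
  unfolding tri_coeff_def by (intro real_sqrt_gt_zero divide_pos_pos mult_pos_pos) auto

text \<open>The summand of the Racah sum in sixj at t = m + s, where m is its smallest lower limit,
  divided by the common factor (-1)^m (m+1)! / (k! p! q! r! u! v!).\<close>
definition reduced_racah_term :: "nat \<Rightarrow> real \<Rightarrow> real \<Rightarrow> real \<Rightarrow> real \<Rightarrow> real \<Rightarrow> real \<Rightarrow> nat \<Rightarrow> real" where
  "reduced_racah_term k A P Q R U V s = (-1) ^ s * real (k choose s) * pochhammer (A + 2) s
     * falling_fact Q (k - s) * falling_fact R (k - s) * falling_fact U s * falling_fact V s
     / pochhammer (P + 1) s"

definition reduced_racah_sum :: "nat \<Rightarrow> real \<Rightarrow> real \<Rightarrow> real \<Rightarrow> real \<Rightarrow> real \<Rightarrow> real \<Rightarrow> real" where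
  "reduced_racah_sum k A P Q R U V = (\<Sum>s\<le>k. reduced_racah_term k A P Q R U V s)"

lemma racah_summand_eq_reduced_racah_term:
  fixes m p q r u v k s :: nat
  assumes "s \<le> k" "k \<le> q + s" "k \<le> r + s" "s \<le> u" "s \<le> v"
  shows "(-1::real) ^ (m + s) * fact (m + s + 1) / (fact s * fact (p + s) * fact (q + s - k)
          * fact (r + s - k) * fact (u - s) * fact (k - s) * fact (v - s))
    = (-1) ^ m * fact (m + 1) / (fact k * fact p * fact q * fact r * fact u * fact v)
       * reduced_racah_term k (real m) (real p) (real q) (real r) (real u) (real v) s"
proof -
  have fm: "(fact (m + s + 1) :: real) = fact (m + 1) * pochhammer (real m + 2) s"
    using fact_add_eq_fact_mult_pochhammer[of "m + 1" s] by (simp add: add.commute add.left_commute)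
  have fp: "(fact (p + s) :: real) = fact p * pochhammer (real p + 1) s"
    by (rule fact_add_eq_fact_mult_pochhammer)
  have fq: "(fact q :: real) = fact (q + s - k) * falling_fact (real q) (k - s)"
    and fr: "(fact r :: real) = fact (r + s - k) * falling_fact (real r) (k - s)"
    and fu: "(fact u :: real) = fact (u - s) * falling_fact (real u) s"
    and fv: "(fact v :: real) = fact (v - s) * falling_fact (real v) s"
    using fact_eq_fact_diff_mult_falling_fact[of "k - s" q] fact_eq_fact_diff_mult_falling_fact[of "k - s" r]
      fact_eq_fact_diff_mult_falling_fact[of s u] fact_eq_fact_diff_mult_falling_fact[of s v] assms
    by (simp_all add: add.commute)
  have fk: "(fact k :: real) = real (k choose s) * fact s * fact (k - s)"
    using binomial_fact[of s k, where 'a=real] assms by simp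
  have "falling_fact (real q) (k - s) \<noteq> 0" "falling_fact (real r) (k - s) \<noteq> 0"
    "falling_fact (real u) s \<noteq> 0" "falling_fact (real v) s \<noteq> 0" "real (k choose s) \<noteq> 0"
    "pochhammer (real p + 1) s \<noteq> 0"
    using fq fr fu fv assms by (auto simp: pochhammer_eq_0_iff)
  then show ?thesis
    unfolding reduced_racah_term_def fm fp fq fr fu fv fk by (simp add: field_simps power_add)
qed

lemma racah_sum_eq_reduced_racah_sum:
  fixes m ma mb mc na nb nc p q r u v k :: nat
  assumes "ma + p = m" "mb + q = m + k" "mc + r = m + k" "na = m + u" "nb = m + k" "nc = m + v"
  shows "(\<Sum>t \<in> {max (max m ma) (max mb mc) .. min na (min nb nc)}. (-1::real) ^ t * fact (t + 1) /
             (fact (t - m) * fact (t - ma) * fact (t - mb) * fact (t - mc) *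
              fact (na - t) * fact (nb - t) * fact (nc - t)))
   = (-1) ^ m * fact (m + 1) / (fact k * fact p * fact q * fact r * fact u * fact v)
      * reduced_racah_sum k (real m) (real p) (real q) (real r) (real u) (real v)"
  (is "sum ?F ?I = ?K * _")
proof -
  let ?G = "reduced_racah_term k (real m) (real p) (real q) (real r) (real u) (real v)"
  have "?I \<subseteq> {m..m + k}" using assms by auto
  then have "sum ?F ?I = sum ?F ({m..m + k} \<inter> ?I)"
    by (simp only: Int_absorb1)
  also have "\<dots> = (\<Sum>t\<in>{m..m + k}. if t \<in> ?I then ?F t else 0)"
    by (rule sum.inter_restrict) simp
  also have "\<dots> = (\<Sum>s\<le>k. if s + m \<in> ?I then ?F (s + m) else 0)"
    using sum.shift_bounds_cl_nat_ivl[of "\<lambda>t. if t \<in> ?I then ?F t else 0" 0 m k]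
    by (simp add: add.commute atMost_atLeast0)
  also have "\<dots> = (\<Sum>s\<le>k. ?K * ?G s)"
  proof (rule sum.cong[OF refl])
    fix s assume "s \<in> {..k}"
    then have s: "s \<le> k" by simp
    show "(if s + m \<in> ?I then ?F (s + m) else 0) = ?K * ?G s"
    proof (cases "k \<le> q + s \<and> k \<le> r + s \<and> s \<le> u \<and> s \<le> v")
      case True
      then have "s + m \<in> ?I" using assms s by auto
      moreover have "m + s - ma = p + s" "m + s - mb = q + s - k" "m + s - mc = r + s - k"
        "na - (m + s) = u - s" "nb - (m + s) = k - s" "nc - (m + s) = v - s"
        using assms True s by auto
      ultimately show ?thesis
        using racah_summand_eq_reduced_racah_term[of s k q r u v m p] True s
        by (simp add: add.commute[of s m])
    next
      case False
      then have "s + m \<notin> ?I" using assms s by auto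
      moreover have "?G s = 0"
        using False s unfolding reduced_racah_term_def by (auto simp: falling_fact_of_nat_eq_0)
      ultimately show ?thesis by simp
    qed
  qed
  finally show ?thesis by (simp add: reduced_racah_sum_def sum_distrib_left)
qed

lemma sixj_eq_0_iff_reduced_racah_sum:
  fixes h c d a b :: real and m ma mb mc na nb nc p q r u v k :: nat
  assumes tri: "triangle h c c" "triangle h a b" "triangle d c b" "triangle d a c"
    and idx: "h + c + c = real m" "h + a + b = real ma" "d + c + b = real mb" "d + a + c = real mc"
      "h + c + d + a = real na" "c + c + a + b = real nb" "c + h + b + d = real nc"
    and shifts: "ma + p = m" "mb + q = m + k" "mc + r = m + k" "na = m + u" "nb = m + k" "nc = m + v"
  shows "sixj h c c d a b = 0 \<longleftrightarrow>
    reduced_racah_sum k (real m) (real p) (real q) (real r) (real u) (real v) = 0"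
proof -
  have "sixj h c c d a b = tri_coeff h c c * tri_coeff h a b * tri_coeff d c b * tri_coeff d a c *
      ((-1) ^ m * fact (m + 1) / (fact k * fact p * fact q * fact r * fact u * fact v)
       * reduced_racah_sum k (real m) (real p) (real q) (real r) (real u) (real v))"
    unfolding sixj_def Let_def
    by (simp only: tri idx floor_of_nat nat_int simp_thms if_True racah_sum_eq_reduced_racah_sum[OF shifts])
  moreover have "tri_coeff h c c * tri_coeff h a b * tri_coeff d c b * tri_coeff d a c \<noteq> 0"
    using tri_coeff_pos by (metis mult_eq_0_iff order_less_irrefl)
  ultimately show ?thesis by simp
qed

lemma racah_parameters:
  fixes a b c d :: real
  assumes tri: "triangle (a + b) c c" "triangle d c b" "triangle d a c" and c: "2 * c \<in> \<int>"
  obtains P Q R U V :: nat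
  where "real P = 2 * c - a - b" "real Q = a + c - d" "real R = b + c - d"
    "real U = a + d - c" "real V = b + d - c"
proof -
  have nat: "\<exists>n. real n = x" if "x \<in> \<int>" "0 \<le> x" for x :: real
  proof -
    have "x \<in> \<nat>" using that by (simp add: Nats_altdef2)
    then show ?thesis by (metis Nats_cases)
  qed
  have abc: "a + b + 2 * c \<in> \<int>" and dcb: "d + c + b \<in> \<int>" and dac: "d + a + c \<in> \<int>"
    using tri unfolding triangle_def by (simp_all add: add.assoc)
  have "2 * d = (d + c + b) + (d + a + c) - (a + b + 2 * c)" by simp
  then have d: "2 * d \<in> \<int>" using abc dcb dac by (metis Ints_diff Ints_add)
  have "2 * c - a - b = 2 * (2 * c) - (a + b + 2 * c)" "a + c - d = (d + a + c) - 2 * d"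
    "b + c - d = (d + c + b) - 2 * d" "a + d - c = (d + a + c) - 2 * c" "b + d - c = (d + c + b) - 2 * c"
    by simp_all
  then have "2 * c - a - b \<in> \<int>" "a + c - d \<in> \<int>" "b + c - d \<in> \<int>" "a + d - c \<in> \<int>" "b + d - c \<in> \<int>"
    using abc dcb dac c d by (metis Ints_diff Ints_mult Ints_numeral)+
  moreover have "0 \<le> 2 * c - a - b" "0 \<le> a + c - d" "0 \<le> b + c - d" "0 \<le> a + d - c" "0 \<le> b + d - c"
    using tri unfolding triangle_def by (auto simp: abs_le_iff)
  ultimately show ?thesis using that nat by metis
qed

lemma sixj_stretched_minus_eq_0_iff:
  fixes a b c d :: real and P Q R U V k :: nat
  assumes tri: "triangle (a + b - k) c c" "triangle (a + b - k) a b" "triangle d c b" "triangle d a c"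
    and par: "real P = 2 * c - a - b" "real Q = a + c - d" "real R = b + c - d"
      "real U = a + d - c" "real V = b + d - c"
  shows "sixj (a + b - k) c c d a b = 0 \<longleftrightarrow>
    reduced_racah_sum k (real P + real Q + real R + real U + real V - k) P Q R U V = 0"
proof -
  define n where "n = P + Q + R + U + V"
  have "real k \<le> a + b" using tri(1) unfolding triangle_def by simp
  then have k: "k \<le> Q + R + U + V" "k \<le> n" using par unfolding n_def by (simp_all flip: of_nat_le_iff)
  then have "sixj (a + b - k) c c d a b = 0 \<longleftrightarrow>
      reduced_racah_sum k (real (n - k)) (real P) (real Q) (real R) (real U) (real V) = 0"
    using par unfolding n_def
    by (intro sixj_eq_0_iff_reduced_racah_sum[OF tri,
        where ma="Q + R + U + V - k" and mb="P + R + U + V" and mc="P + Q + U + V"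
        and na="n - k + U" and nb=n and nc="n - k + V"]) (simp_all add: n_def of_nat_diff)
  then show ?thesis using k(2) unfolding n_def by (simp add: of_nat_diff)
qed

lemma reduced_racah_sum_1_eq_0_iff:
  assumes "0 \<le> P" "Q = U + D" "R = V + D" "U + V + D \<noteq> 0"
  shows "reduced_racah_sum 1 (P + Q + R + U + V - 1) P Q R U V = 0 \<longleftrightarrow> D * (P + 1) = 2 * U * V"
proof -
  have "(P + 1) * reduced_racah_sum 1 (P + Q + R + U + V - 1) P Q R U V
      = (U + V + D) * (D * (P + 1) - 2 * U * V)"
    using assms(1-3) by (simp add: reduced_racah_sum_def reduced_racah_term_def field_simps)
  then show ?thesis using assms(1,4) by (auto simp: add_nonneg_eq_0_iff)
qed

text \<open>The two factorisations below were found by computer algebra; each is a polynomial identity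
  modulo the relation D (P + 1) = 2 U V once the denominators are cleared.\<close>

lemma reduced_racah_sum_2_closed_form:
  assumes "0 \<le> P" "Q = U + D" "R = V + D" "D * (P + 1) = 2 * U * V"
  shows "(P + 2) * reduced_racah_sum 2 (P + Q + R + U + V - 2) P Q R U V
    = - Q * R * (2 * P + 2 * U + 2 * V + D + 2) * (U + V + D - 1)"
proof -
  define A where "A = P + Q + R + U + V - 2"
  have sum: "reduced_racah_sum 2 A P Q R U V = Q*(Q-1)*R*(R-1) - 2*(A+2)*Q*R*U*V/(P+1)
      + (A+2)*(A+3)*U*(U-1)*V*(V-1)/((P+1)*(P+2))"
    using assms(1)
    by (simp add: reduced_racah_sum_def reduced_racah_term_def numeral_2_eq_2 pochhammer_Suc)
      (simp add: field_simps)
  have "(P + 1) * ((P + 2) * reduced_racah_sum 2 A P Q R U V)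
      = (P+1)*(P+2)*Q*(Q-1)*R*(R-1) - 2*(P+2)*(A+2)*Q*R*U*V + (A+2)*(A+3)*U*(U-1)*V*(V-1)"
    unfolding sum using assms(1) by (simp add: divide_simps) algebra
  also have "\<dots> = (P + 1) * (- Q * R * (2 * P + 2 * U + 2 * V + D + 2) * (U + V + D - 1))"
    unfolding A_def using assms(2-) by algebra
  finally show ?thesis using assms(1) unfolding A_def by (simp only: mult_cancel_left) simp
qed

lemma reduced_racah_sum_3_closed_form:
  assumes "0 \<le> P" "Q = U + D" "R = V + D" "D * (P + 1) = 2 * U * V"
  shows "(P + 2) * (P + 3) * reduced_racah_sum 3 (P + Q + R + U + V - 3) P Q R U V
    = - 2 * Q * R * (2 * P + 2 * U + 2 * V + D + 2) * (U + V + D - 1) * (U + V + D - 2)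
        * (2 * U + 2 * V + 2 * D - 3)"
proof -
  define A where "A = P + Q + R + U + V - 3"
  have sum: "reduced_racah_sum 3 A P Q R U V = Q*(Q-1)*(Q-2)*R*(R-1)*(R-2)
      - 3*(A+2)*Q*(Q-1)*R*(R-1)*U*V/(P+1)
      + 3*(A+2)*(A+3)*Q*R*U*(U-1)*V*(V-1)/((P+1)*(P+2))
      - (A+2)*(A+3)*(A+4)*U*(U-1)*(U-2)*V*(V-1)*(V-2)/((P+1)*(P+2)*(P+3))"
    using assms(1)
    by (simp add: reduced_racah_sum_def reduced_racah_term_def numeral_3_eq_3 pochhammer_Suc)
      (simp add: field_simps)
  have "(P + 1) * ((P + 2) * (P + 3) * reduced_racah_sum 3 A P Q R U V)
      = Q*(Q-1)*(Q-2)*R*(R-1)*(R-2)*(P+1)*(P+2)*(P+3)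
      - 3*(A+2)*Q*(Q-1)*R*(R-1)*U*V*(P+2)*(P+3)
      + 3*(A+2)*(A+3)*Q*R*U*(U-1)*V*(V-1)*(P+3)
      - (A+2)*(A+3)*(A+4)*U*(U-1)*(U-2)*V*(V-1)*(V-2)"
    unfolding sum using assms(1) by (simp add: divide_simps) algebra
  also have "\<dots> = (P + 1) * (- 2 * Q * R * (2 * P + 2 * U + 2 * V + D + 2) * (U + V + D - 1)
      * (U + V + D - 2) * (2 * U + 2 * V + 2 * D - 3))"
    unfolding A_def using assms(2-) by algebra
  finally show ?thesis using assms(1) unfolding A_def by (simp only: mult_cancel_left) simp
qed

lemma reduced_racah_sum_2_3_neq_0:
  assumes "0 \<le> P" "0 < U" "0 < V" "Q = U + D" "R = V + D" "D * (P + 1) = 2 * U * V"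
    and "3 \<le> U + V + D"
  shows "reduced_racah_sum 2 (P + Q + R + U + V - 2) P Q R U V \<noteq> 0"
    and "reduced_racah_sum 3 (P + Q + R + U + V - 3) P Q R U V \<noteq> 0"
proof -
  have "0 < D * (P + 1)" using assms(2,3,6) by simp
  then have "0 < D" using assms(1) by (simp add: zero_less_mult_iff)
  then have pos: "0 < Q" "0 < R" "0 < 2 * P + 2 * U + 2 * V + D + 2" using assms(1-5) by auto
  have "(P + 2) * reduced_racah_sum 2 (P + Q + R + U + V - 2) P Q R U V \<noteq> 0"
    unfolding reduced_racah_sum_2_closed_form[OF assms(1,4-6)] using pos assms(7) by simp
  then show "reduced_racah_sum 2 (P + Q + R + U + V - 2) P Q R U V \<noteq> 0" by simp
  have "(P + 2) * (P + 3) * reduced_racah_sum 3 (P + Q + R + U + V - 3) P Q R U V \<noteq> 0"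
    unfolding reduced_racah_sum_3_closed_form[OF assms(1,4-6)] using pos assms(7) by simp
  then show "reduced_racah_sum 3 (P + Q + R + U + V - 3) P Q R U V \<noteq> 0" by simp
qed

lemma triangle_stretched_minus:
  fixes a b c :: real and k :: nat
  assumes "triangle (a + b) c c" "triangle (a + b) a b" "k \<le> 2 * a" "k \<le> 2 * b"
  shows "triangle (a + b - k) c c" and "triangle (a + b - k) a b"
proof -
  have "(a + b + c + c) - k \<in> \<int>" "(a + b + a + b) - k \<in> \<int>"
    using assms(1,2) unfolding triangle_def by (auto intro: Ints_diff)
  moreover have "a + b - k + c + c = (a + b + c + c) - k" "a + b - k + a + b = (a + b + a + b) - k"
    by simp_all
  ultimately show "triangle (a + b - k) c c" "triangle (a + b - k) a b"
    using assms unfolding triangle_def by (simp_all only:) (auto simp: abs_le_iff)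
qed

lemma sixj_stretched_minus_one_eq_0_iff:
  fixes a b c d :: real
  assumes "triangle (a + b) c c" "triangle (a + b - 1) c c" "triangle (a + b - 1) a b"
    and "triangle d c b" "triangle d a c" "2 * c \<in> \<int>"
  shows "sixj (a + b - 1) c c d a b = 0 \<longleftrightarrow> (c - d) * (2 * c - a - b + 1) = (a + d - c) * (b + d - c)"
proof -
  obtain P Q R U V :: nat where par: "real P = 2 * c - a - b" "real Q = a + c - d"
    "real R = b + c - d" "real U = a + d - c" "real V = b + d - c"
    using racah_parameters assms(1,4-6) by blast
  have "1 \<le> a + b" using assms(3) unfolding triangle_def by (auto simp: abs_le_iff)
  then have "reduced_racah_sum 1 (real P + real Q + real R + real U + real V - 1) P Q R U V = 0
      \<longleftrightarrow> 2 * (c - d) * (real P + 1) = 2 * real U * real V"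
    using par by (intro reduced_racah_sum_1_eq_0_iff) auto
  also have "\<dots> \<longleftrightarrow> (c - d) * (2 * c - a - b + 1) = (a + d - c) * (b + d - c)"
    unfolding par by (auto simp: algebra_simps)
  finally show ?thesis
    using sixj_stretched_minus_eq_0_iff[of a b 1 c d, OF _ _ assms(4,5) par] assms(2,3) by simp
qed

lemma sixj_stretched_minus_two_three_neq_0:
  fixes a b c d :: real
  assumes tri: "triangle (a + b) c c" "triangle (a + b) a b" "triangle (a + b - 1) a b"
      "triangle d c b" "triangle d a c"
    and "2 * c \<in> \<int>" "3 \<le> a + b"
    and rel: "(c - d) * (2 * c - a - b + 1) = (a + d - c) * (b + d - c)"
  shows "triangle (a + b - 2) c c \<and> triangle (a + b - 2) a b \<and> sixj (a + b - 2) c c d a b \<noteq> 0"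
    and "triangle (a + b - 3) c c \<and> triangle (a + b - 3) a b \<and> sixj (a + b - 3) c c d a b \<noteq> 0"
proof -
  obtain P Q R U V :: nat where par: "real P = 2 * c - a - b" "real Q = a + c - d"
    "real R = b + c - d" "real U = a + d - c" "real V = b + d - c"
    using racah_parameters tri(1,4,5) assms(6) by blast
  define D where "D = 2 * (c - d)"
  have QR: "real Q = real U + D" "real R = real V + D" and ab: "a + b = real U + real V + D"
    using par unfolding D_def by auto
  have rel': "D * (real P + 1) = 2 * real U * real V"
    unfolding D_def par using rel by algebra
  have "1 \<le> real Q + real U" "1 \<le> real R + real V"
    using tri(3) par unfolding triangle_def by auto
  then have "0 < U" "0 < V" using rel' QR by (auto intro!: gr0I)
  then have "0 < D * (real P + 1)" using rel' by simp
  then have "0 < D" by (simp add: zero_less_mult_iff)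
  then have "U < Q" "V < R" using QR by (simp_all flip: of_nat_less_iff)
  then have "3 \<le> Q + U" "3 \<le> R + V" using \<open>0 < U\<close> \<open>0 < V\<close> by simp_all
  then have "3 \<le> 2 * a" "3 \<le> 2 * b" using par by (simp_all flip: of_nat_le_iff)
  then have tri': "triangle (a + b - k) c c" "triangle (a + b - k) a b" if "k \<le> 3" for k :: nat
    using triangle_stretched_minus[OF tri(1,2), of k] that by auto
  have "reduced_racah_sum 2 (real P + real Q + real R + real U + real V - 2) P Q R U V \<noteq> 0"
    "reduced_racah_sum 3 (real P + real Q + real R + real U + real V - 3) P Q R U V \<noteq> 0"
    using reduced_racah_sum_2_3_neq_0[OF _ _ _ QR rel'] \<open>0 < U\<close> \<open>0 < V\<close> ab assms(7) by simp_all
  then show "triangle (a + b - 2) c c \<and> triangle (a + b - 2) a b \<and> sixj (a + b - 2) c c d a b \<noteq> 0"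
    "triangle (a + b - 3) c c \<and> triangle (a + b - 3) a b \<and> sixj (a + b - 3) c c d a b \<noteq> 0"
    using tri'[of 2] tri'[of 3] sixj_stretched_minus_eq_0_iff[of a b 2 c d, OF _ _ tri(4,5) par]
      sixj_stretched_minus_eq_0_iff[of a b 3 c d, OF _ _ tri(4,5) par] by simp_all
qed

theorem proposition2p3:
  fixes j1 j2 j3 j4 j5 j6 :: real
  assumes "halfint j1" "halfint j2" "halfint j3" "halfint j4" "halfint j5" "halfint j6"
    and "j1 = j5 + j6" and "j1 \<ge> 3" and "j2 = j3"
    and "\<forall>h \<in> {j1, j1 - 1}. triangle h j2 j3 \<and> triangle h j5 j6
                              \<and> triangle j4 j2 j6 \<and> triangle j4 j5 j3"
    and "sixj (j1 - 1) j2 j3 j4 j5 j6 = 0"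
  shows "sixj (j1 - 2) j2 j3 j4 j5 j6 \<noteq> 0 \<and> sixj (j1 - 3) j2 j3 j4 j5 j6 \<noteq> 0
    \<and> (\<forall>h \<in> {j1 - 2, j1 - 3}. triangle h j2 j3 \<and> triangle h j5 j6
                              \<and> triangle j4 j2 j6 \<and> triangle j4 j5 j3)"
proof -
  have tri: "triangle (j5 + j6) j2 j2" "triangle (j5 + j6) j5 j6" "triangle (j5 + j6 - 1) j2 j2"
    "triangle (j5 + j6 - 1) j5 j6" "triangle j4 j2 j6" "triangle j4 j5 j2"
    using assms(7,9,10) by auto
  have c: "2 * j2 \<in> \<int>" using assms(2) by (simp add: halfint_def)
  have "(j2 - j4) * (2 * j2 - j5 - j6 + 1) = (j5 + j4 - j2) * (j6 + j4 - j2)"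
    using sixj_stretched_minus_one_eq_0_iff[OF tri(1,3,4,5,6) c] assms(7,9,11) by simp
  then show ?thesis
    using sixj_stretched_minus_two_three_neq_0[OF tri(1,2,4,5,6) c] tri(5,6) assms(7-9) by auto
qed

end
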